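(* Let $m\in(0,1]$ and assume $\alpha>\frac{1}{Kh}$, $\theta>\theta_2$ and $c_2<c<c_1$. Then $G>0$, $H>0$, and the interior fixed point $E^*=(x^*,y^* )$ of the discrete map (DFP) is stable (both Jacobian eigenvalues have modulus $<1$) whenever $s<\min\{s_4,s_5\}$, where $$s_4=\Bigl(\frac{m\Gamma(m)G}{H}\Bigr)^{1/m},\qquad s_5=\Bigl(\frac{2m\Gamma(m)}{G}\Bigr)^{1/m}.$$
   Context: Fix parameters $r,K,\alpha,h,d>0$, $0<\theta<1$, $0<c<1$, a fractional order $m\in(0,1]$ and a step size $s>0$; put $S=\frac{s^m}{m\Gamma(m)}$. The discretized fractional-order system (DFP) is the map $$x_{n+1}=x_n+S\,x_n\Bigl(r\bigl(1-\tfrac{x_n}{K}\bigr)-\frac{\alpha(1-c)y_n}{1+\alpha(1-c)hx_n}\Bigr),\qquad y_{n+1}=y_n+S\,y_n\Bigl(\frac{\theta\alpha(1-c)x_n}{1+\alpha(1-c)hx_n}-d\Bigr).$$ Its interior fixed point is $E^*=(x^*,y^* )$ with $x^*=\frac{d}{\alpha(1-c)(\theta-hd)}$, $y^*=\frac{r(K-x^* )\{1+\alpha h(1-c)x^*\}}{\alpha K(1-c)}$. Define $G=\frac{rx^*}{K\theta}\bigl[\theta+hd-\alpha hK(1-c)(\theta-hd)\bigr]$, $H=\frac{rx^*(\theta-hd)}{K\theta}\bigl[\alpha K(1-c)(\theta-hd)-d\bigr]$. Thresholds: $c_1=1-\frac{d}{\alpha K(\theta-hd)}$, $c_2=1-\frac{\theta+hd}{\alpha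 Kh(\theta-hd)}$, $\theta_2=\frac{hd(\alpha Kh+1)}{\alpha Kh-1}$. *)

theory Defs
  imports "HOL-Analysis.Analysis"
begin

definition Sfac :: "real \<Rightarrow> real \<Rightarrow> real" where
  "Sfac m s = s powr m / (m * Gamma m)"

definition DFP :: "real \<Rightarrow> real \<Rightarrow> real \<Rightarrow> real \<Rightarrow> real \<Rightarrow> real \<Rightarrow> real \<Rightarrow> real \<Rightarrow> real
                    \<Rightarrow> real^2 \<Rightarrow> real^2" where
  "DFP r K \<alpha> h d \<theta> c m s p =
    (let x = p$1; y = p$2; S = Sfac m s in
     vector [x + S * x * (r * (1 - x / K) - \<alpha> * (1 - c) * y / (1 + \<alpha> * (1 - c) * h * x)),
             y + S * y * (\<theta> * \<alpha> * (1 - c) * x / (1 + \<alpha> * (1 - c) * h * x) - d)])"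

definition xstar :: "real \<Rightarrow> real \<Rightarrow> real \<Rightarrow> real \<Rightarrow> real \<Rightarrow> real" where
  "xstar \<alpha> h d \<theta> c = d / (\<alpha> * (1 - c) * (\<theta> - h * d))"

definition ystar :: "real \<Rightarrow> real \<Rightarrow> real \<Rightarrow> real \<Rightarrow> real \<Rightarrow> real \<Rightarrow> real \<Rightarrow> real" where
  "ystar r K \<alpha> h d \<theta> c = (let x = xstar \<alpha> h d \<theta> c in
      r * (K - x) * (1 + \<alpha> * h * (1 - c) * x) / (\<alpha> * K * (1 - c)))"

definition Gval :: "real \<Rightarrow> real \<Rightarrow> real \<Rightarrow> real \<Rightarrow> real \<Rightarrow> real \<Rightarrow> real \<Rightarrow> real" where
  "Gval r K \<alpha> h d \<theta> c = r * xstar \<alpha> h d \<theta> c / (K * \<theta>) *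
      (\<theta> + h * d - \<alpha> * h * K * (1 - c) * (\<theta> - h * d))"

definition Hval :: "real \<Rightarrow> real \<Rightarrow> real \<Rightarrow> real \<Rightarrow> real \<Rightarrow> real \<Rightarrow> real \<Rightarrow> real" where
  "Hval r K \<alpha> h d \<theta> c = r * xstar \<alpha> h d \<theta> c * (\<theta> - h * d) / (K * \<theta>) *
      (\<alpha> * K * (1 - c) * (\<theta> - h * d) - d)"

definition cplx_eigenvalue :: "real^2^2 \<Rightarrow> complex \<Rightarrow> bool" where
  "cplx_eigenvalue A z \<longleftrightarrow>
     (\<exists>v::complex^2. v \<noteq> 0 \<and> (\<chi> i. \<Sum>j\<in>UNIV. complex_of_real (A$i$j) * v$j) = z *s v)"

end

theory Submission
  imports Defs
begin

text \<open>At the interior fixed point the Jacobian of (DFP) has trace 2 - S G and determinant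
  1 - S G + S^2 H, where S = s^m / (m Gamma(m)). By the Jury conditions for the characteristic
  polynomial z^2 - T z + D, both eigenvalues lie in the open unit disc when D < 1 and
  1 - T + D > 0 and 1 + T + D > 0. Here 1 - T + D = S^2 H > 0 since H > 0, while D < 1 and
  1 + T + D > 0 amount to S H < G and S G < 2, i.e. to s < s4 and s < s5.\<close>

lemma real_quadratic_roots_in_unit_disc:
  fixes T D :: real and z :: complex
  assumes root: "z^2 - T * z + D = 0" and "D < 1" and "1 - T + D > 0" and "1 + T + D > 0"
  shows "cmod z < 1"
proof -
  obtain a b where z: "z = Complex a b" by (cases z)
  have re: "a^2 - b^2 - T * a + D = 0" and im: "(2 * a - T) * b = 0"
    using root unfolding z by (auto simp: complex_eq_iff power2_eq_square algebra_simps)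
  show ?thesis
  proof (cases "b = 0")
    case True
    text \<open>The roots a and T - a have product D < 1, so they cannot lie beyond the same one of
      \<plusminus>1; the positivity of (1 \<mp> a)(1 \<mp> (T - a)) rules out opposite sides.\<close>
    have prod: "a * (T - a) = D" using re True by (simp add: power2_eq_square algebra_simps)
    have pos: "(1 - a) * (1 - (T - a)) > 0" "(1 + a) * (1 + (T - a)) > 0"
      using assms(3,4) prod by (simp_all add: algebra_simps)
    have not_both_gt_1: "\<not> (1 < u \<and> 1 < v)" if "u * v < 1" for u v :: real
      using less_1_mult that by fastforce
    have "a * (T - a) < 1" "(-a) * (a - T) < 1"
      using prod \<open>D < 1\<close> by (simp_all add: algebra_simps)
    hence "a < 1" "-1 < a"
      using pos not_both_gt_1[of a "T - a"] not_both_gt_1[of "-a" "a - T"]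
      by (auto simp: zero_less_mult_iff)
    hence "\<bar>a\<bar> < 1" by simp
    thus ?thesis using True z by (simp add: cmod_def)
  next
    case False
    hence "T = 2 * a" using im by simp
    hence "a^2 + b^2 = D" using re by (simp add: power2_eq_square)
    thus ?thesis using z \<open>D < 1\<close> by (simp add: cmod_def)
  qed
qed

lemma cplx_eigenvalue_char_poly:
  fixes J :: "real^2^2"
  assumes "cplx_eigenvalue J z"
  shows "z^2 - complex_of_real (J$1$1 + J$2$2) * z
           + complex_of_real (J$1$1 * J$2$2 - J$1$2 * J$2$1) = 0"
proof -
  obtain v :: "complex^2" where "v \<noteq> 0"
    and ev: "(\<chi> i. \<Sum>j\<in>UNIV. complex_of_real (J$i$j) * v$j) = z *s v"
    using assms unfolding cplx_eigenvalue_def by blast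
  let ?a = "complex_of_real (J$1$1)" and ?b = "complex_of_real (J$1$2)"
  let ?c = "complex_of_real (J$2$1)" and ?d = "complex_of_real (J$2$2)"
  have e1: "?a * v$1 + ?b * v$2 = z * v$1" and e2: "?c * v$1 + ?d * v$2 = z * v$2"
    using arg_cong[OF ev, of "\<lambda>w. w$1"] arg_cong[OF ev, of "\<lambda>w. w$2"] by (simp_all add: sum_2)
  define P where "P = (?a - z) * (?d - z) - ?b * ?c"
  have "P * v$1 = (?d - z) * (?a * v$1 + ?b * v$2 - z * v$1) - ?b * (?c * v$1 + ?d * v$2 - z * v$2)"
    and "P * v$2 = (?a - z) * (?c * v$1 + ?d * v$2 - z * v$2) - ?c * (?a * v$1 + ?b * v$2 - z * v$1)"
    unfolding P_def by (simp_all add: algebra_simps)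
  hence "P * v$1 = 0" "P * v$2 = 0" using e1 e2 by simp_all
  moreover have "v$1 \<noteq> 0 \<or> v$2 \<noteq> 0"
    using \<open>v \<noteq> 0\<close> by (auto simp: vec_eq_iff forall_2)
  ultimately have "P = 0" by auto
  thus ?thesis unfolding P_def by (simp add: algebra_simps power2_eq_square)
qed

lemma cplx_eigenvalue_cmod_less_1:
  fixes J :: "real^2^2"
  defines "T \<equiv> J$1$1 + J$2$2" and "D \<equiv> J$1$1 * J$2$2 - J$1$2 * J$2$1"
  assumes "D < 1" and "1 - T + D > 0" and "1 + T + D > 0" and "cplx_eigenvalue J z"
  shows "cmod z < 1"
  using real_quadratic_roots_in_unit_disc cplx_eigenvalue_char_poly assms by metis

lemma cplx_eigenvalue_cmod_less_1_if_small_step: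
  fixes J :: "real^2^2"
  assumes "J$1$1 = 1 - S * G" and "J$2$2 = 1" and "J$1$2 * J$2$1 = - (S^2 * H)"
    and "0 < S" and "0 < H" and "S * H < G" and "S * G < 2" and "cplx_eigenvalue J z"
  shows "cmod z < 1"
proof (rule cplx_eigenvalue_cmod_less_1[OF _ _ _ \<open>cplx_eigenvalue J z\<close>])
  have "S^2 * H < S * G" using \<open>S * H < G\<close> \<open>0 < S\<close> by (simp add: power2_eq_square)
  moreover have "0 < S^2 * H" using \<open>0 < S\<close> \<open>0 < H\<close> by simp
  ultimately show "J$1$1 * J$2$2 - J$1$2 * J$2$1 < 1"
    and "0 < 1 - (J$1$1 + J$2$2) + (J$1$1 * J$2$2 - J$1$2 * J$2$1)"
    and "0 < 1 + (J$1$1 + J$2$2) + (J$1$1 * J$2$2 - J$1$2 * J$2$1)"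
    using assms(1-3,7) by (simp_all add: algebra_simps)
qed

lemma has_derivative_vec2_componentwise:
  fixes f :: "real^2 \<Rightarrow> real^2" and J :: "real^2^2"
  assumes "((\<lambda>p. f p $ 1) has_derivative (\<lambda>v. (J *v v) $ 1)) (at q within S)"
    and "((\<lambda>p. f p $ 2) has_derivative (\<lambda>v. (J *v v) $ 2)) (at q within S)"
  shows "(f has_derivative (\<lambda>v. J *v v)) (at q within S)"
proof (rule has_derivative_componentwise_within[THEN iffD2], rule ballI)
  fix i :: "real^2" assume "i \<in> Basis"
  then obtain j where "i = axis j 1" unfolding Basis_vec_def by auto
  moreover have "j = 1 \<or> j = 2" by (rule exhaust_2)
  ultimately show "((\<lambda>p. f p \<bullet> i) has_derivative (\<lambda>v. (J *v v) \<bullet> i)) (at q within S)"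
    using assms by (auto simp: inner_axis)
qed

text \<open>With the Holling type II response phi(x) = A x / (1 + A h x), A = \<alpha> (1 - c), the map is
  (x + S (r x (1 - x/K) - y phi(x)), y + S y (\<theta> phi(x) - d)), and phi'(x) = A / (1 + A h x)^2.\<close>
definition DFP_jacobian ::
    "real \<Rightarrow> real \<Rightarrow> real \<Rightarrow> real \<Rightarrow> real \<Rightarrow> real \<Rightarrow> real \<Rightarrow> real \<Rightarrow> real \<Rightarrow> real \<Rightarrow> real \<Rightarrow> real^2^2"
  where "DFP_jacobian r K \<alpha> h d \<theta> c m s x y =
    (let S = Sfac m s; A = \<alpha> * (1 - c); Q = 1 + A * h * x in
     vector [vector [1 + S * (r * (1 - 2 * x / K) - A * y / Q^2), - S * A * x / Q],
             vector [S * \<theta> * A * y / Q^2, 1 + S * (\<theta> * A * x / Q - d)]])"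

lemma DFP_has_derivative:
  assumes "1 + \<alpha> * (1 - c) * h * x \<noteq> 0" and "K \<noteq> 0"
  shows "(DFP r K \<alpha> h d \<theta> c m s has_derivative (\<lambda>v. DFP_jacobian r K \<alpha> h d \<theta> c m s x y *v v))
           (at (vector [x, y]))"
proof (rule has_derivative_vec2_componentwise)
  define A Q where "A = \<alpha> * (1 - c)" and "Q = 1 + A * h * x"
  have "Q \<noteq> 0" using assms(1) unfolding Q_def A_def by simp
  have coord: "((\<lambda>p::real^2. p$i) has_derivative (\<lambda>v. v$i)) F" for i F
    by (rule bounded_linear_imp_has_derivative[OF bounded_linear_vec_nth])
  note jacobian = DFP_jacobian_def Let_def matrix_vector_mult_def sum_2 A_def[symmetric] Q_def[symmetric]
  show "((\<lambda>p. DFP r K \<alpha> h d \<theta> c m s p $ 1) has_derivative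
          (\<lambda>v. (DFP_jacobian r K \<alpha> h d \<theta> c m s x y *v v) $ 1)) (at (vector [x, y]))"
    unfolding DFP_def Let_def vector_2
    apply (rule has_derivative_eq_rhs)
     apply (rule derivative_eq_intros coord | use assms in simp)+
    apply (rule ext)
    apply (simp add: jacobian)
    using \<open>Q \<noteq> 0\<close> \<open>K \<noteq> 0\<close>
    by (simp add: field_simps power2_eq_square) (simp add: Q_def A_def algebra_simps)
  show "((\<lambda>p. DFP r K \<alpha> h d \<theta> c m s p $ 2) has_derivative
          (\<lambda>v. (DFP_jacobian r K \<alpha> h d \<theta> c m s x y *v v) $ 2)) (at (vector [x, y]))"
    unfolding DFP_def Let_def vector_2
    apply (rule has_derivative_eq_rhs)
     apply (rule derivative_eq_intros coord | use assms in simp)+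
    apply (rule ext)
    apply (simp add: jacobian)
    using \<open>Q \<noteq> 0\<close> by (simp add: field_simps power2_eq_square) (simp add: Q_def A_def algebra_simps)
qed

lemma xstar_holling_denominator:
  assumes "\<alpha> * (1 - c) \<noteq> 0" and "\<theta> - h * d \<noteq> 0"
  shows "1 + \<alpha> * (1 - c) * h * xstar \<alpha> h d \<theta> c = \<theta> / (\<theta> - h * d)"
proof -
  have "\<alpha> * (1 - c) * h * xstar \<alpha> h d \<theta> c = h * d / (\<theta> - h * d)"
    using assms by (simp add: xstar_def)
  thus ?thesis using assms by (simp add: field_simps)
qed

lemma DFP_jacobian_at_interior_fixed_point:
  fixes r K \<alpha> h d \<theta> c m s :: real
  defines "J \<equiv> DFP_jacobian r K \<alpha> h d \<theta> c m s (xstar \<alpha> h d \<theta> c) (ystar r K \<alpha> h d \<theta> c)"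
    and "S \<equiv> Sfac m s"
  assumes "K \<noteq> 0" and "\<theta> \<noteq> 0" and "\<alpha> * (1 - c) \<noteq> 0" and "\<theta> - h * d \<noteq> 0"
  shows "J$1$1 = 1 - S * Gval r K \<alpha> h d \<theta> c" and "J$2$2 = 1"
    and "J$1$2 * J$2$1 = - (S^2 * Hval r K \<alpha> h d \<theta> c)"
proof -
  define A where "A = \<alpha> * (1 - c)"
  define \<beta> where "\<beta> = \<theta> - h * d"
  define x where "x = xstar \<alpha> h d \<theta> c"
  define y where "y = ystar r K \<alpha> h d \<theta> c"
  define Q where "Q = 1 + A * h * x"
  have "A \<noteq> 0" "\<beta> \<noteq> 0" using assms unfolding A_def \<beta>_def by simp_all
  have \<theta>: "\<theta> = \<beta> * Q"
    using xstar_holling_denominator[of \<alpha> c \<theta> h d] assms \<open>\<beta> \<noteq> 0\<close>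
    unfolding Q_def A_def x_def \<beta>_def by simp
  have "Q \<noteq> 0" using \<theta> assms by auto
  text \<open>Eliminating d and \<theta> turns every entry into a rational identity in A, \<beta>, x, Q, h, K, r.\<close>
  have d: "d = A * x * \<beta>" using \<open>A \<noteq> 0\<close> \<open>\<beta> \<noteq> 0\<close> unfolding x_def xstar_def A_def \<beta>_def by simp
  have y: "y = r * (K - x) * Q / (A * K)"
    unfolding y_def ystar_def x_def[symmetric] Q_def A_def Let_def by (simp add: algebra_simps)
  have G: "Gval r K \<alpha> h d \<theta> c = r * x / (K * \<theta>) * (\<theta> + h * d - A * h * K * \<beta>)"
    unfolding Gval_def x_def A_def \<beta>_def by (simp add: algebra_simps)
  have H: "Hval r K \<alpha> h d \<theta> c = r * x * \<beta> / (K * \<theta>) * (A * K * \<beta> - d)"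
    unfolding Hval_def x_def A_def \<beta>_def by (simp add: algebra_simps)
  note nonzero = \<open>K \<noteq> 0\<close> \<open>A \<noteq> 0\<close> \<open>\<beta> \<noteq> 0\<close> \<open>Q \<noteq> 0\<close>
  have J: "J = DFP_jacobian r K \<alpha> h d \<theta> c m s x y" unfolding J_def x_def y_def ..
  note unfold_J = J DFP_jacobian_def Let_def A_def[symmetric] Q_def[symmetric] S_def[symmetric]
  show "J$1$1 = 1 - S * Gval r K \<alpha> h d \<theta> c"
    unfolding unfold_J G using nonzero
    by (simp add: y d \<theta> field_simps) (simp add: Q_def algebra_simps power2_eq_square)
  show "J$2$2 = 1"
    unfolding unfold_J using nonzero by (simp add: d \<theta>)
  show "J$1$2 * J$2$1 = - (S^2 * Hval r K \<alpha> h d \<theta> c)"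
    unfolding unfold_J H using nonzero
    by (simp add: y d \<theta> field_simps power2_eq_square)
qed

lemma hd_less_theta:
  fixes K h d \<alpha> \<theta> :: real
  assumes "0 < K" and "0 < h" and "0 < d" and "1 / (K * h) < \<alpha>"
    and "h * d * (\<alpha> * K * h + 1) / (\<alpha> * K * h - 1) < \<theta>"
  shows "h * d < \<theta>"
proof -
  have "1 < \<alpha> * K * h" using assms(1,2,4) by (simp add: pos_divide_less_eq mult.assoc)
  hence "h * d < h * d * (\<alpha> * K * h + 1) / (\<alpha> * K * h - 1)"
    using assms(2,3) by (simp add: field_simps)
  thus ?thesis using assms(5) by linarith
qed

lemma xstar_pos: "0 < d \<Longrightarrow> 0 < \<alpha> * (1 - c) \<Longrightarrow> h * d < \<theta> \<Longrightarrow> 0 < xstar \<alpha> h d \<theta> c"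
  by (simp add: xstar_def)

lemma Gval_pos:
  assumes "0 < r" and "0 < K" and "0 < h" and "0 < d" and "0 < \<alpha>" and "c < 1" and "h * d < \<theta>"
    and "1 - (\<theta> + h * d) / (\<alpha> * K * h * (\<theta> - h * d)) < c"
  shows "0 < Gval r K \<alpha> h d \<theta> c"
proof -
  have "0 < \<alpha> * K * h * (\<theta> - h * d)" using assms by simp
  moreover have "1 - c < (\<theta> + h * d) / (\<alpha> * K * h * (\<theta> - h * d))" using assms(8) by linarith
  ultimately have "(1 - c) * (\<alpha> * K * h * (\<theta> - h * d)) < \<theta> + h * d"
    by (simp add: pos_less_divide_eq)
  moreover have "0 < xstar \<alpha> h d \<theta> c" using assms by (intro xstar_pos) auto
  moreover have "0 < \<theta>" using assms(3,4,7) by (smt (verit) mult_pos_pos)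
  ultimately show ?thesis
    unfolding Gval_def using assms(1,2) by (intro mult_pos_pos divide_pos_pos) (auto simp: algebra_simps)
qed

lemma Hval_pos:
  assumes "0 < r" and "0 < K" and "0 < h" and "0 < d" and "0 < \<alpha>" and "h * d < \<theta>"
    and "c < 1 - d / (\<alpha> * K * (\<theta> - h * d))"
  shows "0 < Hval r K \<alpha> h d \<theta> c"
proof -
  have "0 < \<alpha> * K * (\<theta> - h * d)" using assms by simp
  moreover have "d / (\<alpha> * K * (\<theta> - h * d)) < 1 - c" using assms(7) by linarith
  ultimately have "d < (1 - c) * (\<alpha> * K * (\<theta> - h * d))"
    by (simp add: pos_divide_less_eq)
  moreover have "c < 1" using \<open>0 < \<alpha> * K * (\<theta> - h * d)\<close> assms(4,7) by (smt (verit) divide_pos_pos)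
  moreover from this have "0 < xstar \<alpha> h d \<theta> c" using assms by (intro xstar_pos) auto
  moreover have "0 < \<theta>" using assms(3,4,6) by (smt (verit) mult_pos_pos)
  ultimately show ?thesis
    unfolding Hval_def using assms(1,2,6) by (intro mult_pos_pos divide_pos_pos) (auto simp: algebra_simps)
qed

lemma Sfac_less_if_less_powr:
  assumes "0 < m" and "0 < s" and "0 < B" and "s < (m * Gamma m * B) powr (1 / m)"
  shows "Sfac m s < B"
proof -
  have "0 < m * Gamma m" using assms(1) by (simp add: Gamma_real_pos)
  have "s powr m < ((m * Gamma m * B) powr (1 / m)) powr m"
    using assms by (intro powr_less_mono2) auto
  also have "\<dots> = m * Gamma m * B" using assms(1,3) \<open>0 < m * Gamma m\<close> by (simp add: powr_powr)
  finally show ?thesis unfolding Sfac_def using \<open>0 < m * Gamma m\<close> by (simp add: divide_less_eq mult.commute)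
qed

theorem theorem3p1:
  fixes r K \<alpha> h d \<theta> c m s :: real
  assumes "r > 0" and "K > 0" and "\<alpha> > 0" and "h > 0" and "d > 0"
    and "0 < \<theta>" and "\<theta> < 1" and "0 < c" and "c < 1"
    and "0 < m" and "m \<le> 1" and "s > 0"
    and "\<alpha> > 1 / (K * h)"
    and "\<theta> > h * d * (\<alpha> * K * h + 1) / (\<alpha> * K * h - 1)"
    and "1 - (\<theta> + h * d) / (\<alpha> * K * h * (\<theta> - h * d)) < c"
    and "c < 1 - d / (\<alpha> * K * (\<theta> - h * d))"
    and "s < min ((m * Gamma m * Gval r K \<alpha> h d \<theta> c / Hval r K \<alpha> h d \<theta> c) powr (1 / m))
                 ((2 * m * Gamma m / Gval r K \<alpha> h d \<theta> c) powr (1 / m))"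
  shows "Gval r K \<alpha> h d \<theta> c > 0 \<and> Hval r K \<alpha> h d \<theta> c > 0 \<and>
    (\<exists>J :: real^2^2.
       (DFP r K \<alpha> h d \<theta> c m s has_derivative (\<lambda>v. J *v v))
          (at (vector [xstar \<alpha> h d \<theta> c, ystar r K \<alpha> h d \<theta> c])) \<and>
       (\<forall>z. cplx_eigenvalue J z \<longrightarrow> cmod z < 1))"
proof -
  define G H S where "G = Gval r K \<alpha> h d \<theta> c" and "H = Hval r K \<alpha> h d \<theta> c" and "S = Sfac m s"
  define J where "J = DFP_jacobian r K \<alpha> h d \<theta> c m s (xstar \<alpha> h d \<theta> c) (ystar r K \<alpha> h d \<theta> c)"
  have "h * d < \<theta>" using assms by (intro hd_less_theta) auto
  have "0 < G" "0 < H" unfolding G_def H_def using assms \<open>h * d < \<theta>\<close> by (simp_all add: Gval_pos Hval_pos)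
  have "0 < S" using assms by (simp add: S_def Sfac_def Gamma_real_pos)
  have "S * H < G" "S * G < 2"
    using Sfac_less_if_less_powr[of m s "G / H"] Sfac_less_if_less_powr[of m s "2 / G"] assms
      \<open>0 < G\<close> \<open>0 < H\<close> unfolding G_def H_def S_def by (simp_all add: field_simps)
  have entries: "J$1$1 = 1 - S * G" "J$2$2 = 1" "J$1$2 * J$2$1 = - (S^2 * H)"
    unfolding J_def G_def H_def S_def using assms \<open>h * d < \<theta>\<close>
    by (simp_all add: DFP_jacobian_at_interior_fixed_point)
  have "(DFP r K \<alpha> h d \<theta> c m s has_derivative (\<lambda>v. J *v v))
          (at (vector [xstar \<alpha> h d \<theta> c, ystar r K \<alpha> h d \<theta> c]))"
    unfolding J_def using assms \<open>h * d < \<theta>\<close>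
    by (intro DFP_has_derivative) (simp_all add: xstar_holling_denominator)
  moreover have "cmod z < 1" if "cplx_eigenvalue J z" for z
    using cplx_eigenvalue_cmod_less_1_if_small_step[OF entries \<open>0 < S\<close> \<open>0 < H\<close>] that
      \<open>S * H < G\<close> \<open>S * G < 2\<close> by blast
  ultimately show ?thesis using \<open>0 < G\<close> \<open>0 < H\<close> unfolding G_def H_def by blast
qed

end
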